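(* Let $\mu^\ast$ be an upper quasi-density on $\mathbb{H}$, and let $X\subseteq Y\subseteq\mathbb{H}$, where $Y$ has finite symmetric difference with a finite union of sets of the form $q\cdot\mathbb{H}+r$ ($q\in\mathbb{N}^+$, $r\in\mathbb{N}$) (equivalently: there are $k\in\mathbb{N}^+$ and $\mathcal{H}\subseteq\{0,1,\dots,k-1\}$ such that $Y\,\triangle\,\bigcup_{h\in\mathcal{H}}(k\cdot\mathbb{H}+h)$ is finite; this includes the case where $Y$ itself is such a finite union). Then $\mu^\ast(X)\le\mu^\ast(Y)$.
   Context: $\mathbb{N}=\{0,1,2,\dots\}$, $\mathbb{N}^+=\{1,2,\dots\}$; $\mathbb{H}$ is one of $\mathbb{Z},\mathbb{N},\mathbb{N}^+$. For $X\subseteq\mathbb{H}$, $k\in\mathbb{N}^+$, $h\in\mathbb{N}$, $k\cdot X+h:=\{kx+h:x\in X\}$. An upper quasi-density on $\mathbb{H}$ is a function $\mu^\ast:\mathcal{P}(\mathbb{H})\to\mathbb{R}$ with $\mu^\ast(\mathbb{H})=1$, $\mu^\ast(X)\le1$ for all $X$, $\mu^\ast(X\cup Y)\le\mu^\ast(X)+\mu^\ast(Y)$ for all $X,Y$, and $\mu^\ast(k\cdot X+h)=\frac1k\mu^\ast(X)$ for all $X\subseteq\mathbb{H}$, $h,k\in\mathbb{N}^+$. *)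

theory Defs
  imports Complex_Main
begin

text \<open>The ambient set H is one of Z, N, N+, all modelled as subsets of int.\<close>
definition admissible_H :: "int set \<Rightarrow> bool" where
  "admissible_H H \<longleftrightarrow> H = UNIV \<or> H = {0..} \<or> H = {1..}"

definition dil :: "nat \<Rightarrow> int set \<Rightarrow> nat \<Rightarrow> int set" where
  "dil k X h = (\<lambda>x. int k * x + int h) ` X"

definition upper_quasi_density :: "int set \<Rightarrow> (int set \<Rightarrow> real) \<Rightarrow> bool" where
  "upper_quasi_density H mu \<longleftrightarrow>
     mu H = 1 \<and>
     (\<forall>X. X \<subseteq> H \<longrightarrow> mu X \<le> 1) \<and>
     (\<forall>X Y. X \<subseteq> H \<longrightarrow> Y \<subseteq> H \<longrightarrow> mu (X \<union> Y) \<le> mu X + mu Y) \<and>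
     (\<forall>X k h. X \<subseteq> H \<longrightarrow> k > 0 \<longrightarrow> h > 0 \<longrightarrow> mu (dil k X h) = mu X / real k)"

end

theory Submission
  imports Defs
begin

text \<open>
  Let \<open>k\<close> be the product of the moduli. The residue classes \<open>k\<cdot>H + h\<close>, \<open>1 \<le> h \<le> k\<close>, cover \<open>H\<close>
  up to finitely many points, and each of them is either almost contained in \<open>Y\<close> or almost
  disjoint from it. If \<open>T\<close> collects the classes of the first kind, then \<open>X\<close> is covered up to a
  finite set by \<open>|T|\<close> classes and \<open>H - Y\<close> by the remaining \<open>k - |T|\<close> ones. Since finite sets
  have upper quasi-density \<open>0\<close> and a class has upper quasi-density at most \<open>1/k\<close>, this gives
  \<open>\<mu>*(X) \<le> |T|/k\<close> and \<open>1 = \<mu>*(H) \<le> \<mu>*(Y) + (k - |T|)/k\<close>.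
\<close>

lemma finite_Int_or_Diff_UN:
  assumes "finite I" "\<forall>i\<in>I. finite (C \<inter> A i) \<or> finite (C - A i)"
  shows "finite (C \<inter> (\<Union>i\<in>I. A i)) \<or> finite (C - (\<Union>i\<in>I. A i))"
proof (cases "\<exists>i\<in>I. finite (C - A i)")
  case True
  then obtain i where "i \<in> I" "finite (C - A i)" by blast
  moreover have "C - (\<Union>i\<in>I. A i) \<subseteq> C - A i" using \<open>i \<in> I\<close> by blast
  ultimately show ?thesis using finite_subset by blast
next
  case False
  then have "\<forall>i\<in>I. finite (C \<inter> A i)" using assms(2) by blast
  then have "finite (\<Union>i\<in>I. C \<inter> A i)" using finite_UN_I[OF assms(1), of "\<lambda>i. C \<inter> A i"] by blast
  then have "finite (C \<inter> (\<Union>i\<in>I. A i))" by (simp only: Int_UN_distrib)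
  then show ?thesis ..
qed

lemma finite_Int_or_Diff_sym_diff:
  assumes "finite (C \<inter> A) \<or> finite (C - A)" "finite (sym_diff A B)"
  shows "finite (C \<inter> B) \<or> finite (C - B)"
proof -
  have "C \<inter> B \<subseteq> (C \<inter> A) \<union> sym_diff A B" "C - B \<subseteq> (C - A) \<union> sym_diff A B"
    by blast+
  with assms show ?thesis using finite_subset[OF _ finite_UnI] by metis
qed

context
  fixes H :: "int set" and mu :: "int set \<Rightarrow> real"
  assumes uqd: "upper_quasi_density H mu"
begin

lemma uqd_subadditive: "X \<subseteq> H \<Longrightarrow> Y \<subseteq> H \<Longrightarrow> mu (X \<union> Y) \<le> mu X + mu Y"
  using uqd unfolding upper_quasi_density_def by simp

lemma uqd_dil: "X \<subseteq> H \<Longrightarrow> k > 0 \<Longrightarrow> h > 0 \<Longrightarrow> mu (dil k X h) = mu X / real k"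
  using uqd unfolding upper_quasi_density_def by simp

lemma uqd_le_1: "X \<subseteq> H \<Longrightarrow> mu X \<le> 1"
  using uqd unfolding upper_quasi_density_def by simp

lemma uqd_le_add_complement:
  assumes "Y \<subseteq> H"
  shows "1 \<le> mu Y + mu (H - Y)"
proof -
  have "mu (Y \<union> (H - Y)) \<le> mu Y + mu (H - Y)" using assms by (intro uqd_subadditive) auto
  moreover have "Y \<union> (H - Y) = H" using assms by blast
  ultimately show ?thesis using uqd unfolding upper_quasi_density_def by simp
qed

lemma uqd_empty: "mu {} = 0"
  using uqd_dil[of "{}" 2 1] by (simp add: dil_def)

text \<open>A point \<open>z\<close> far enough to the right is both a translate of \<open>y\<close> and a translate of \<open>2y\<close>.\<close>
lemma uqd_singleton:
  assumes "y \<in> H"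
  shows "mu {y} = 0"
proof -
  define z where "z = 2 * \<bar>y\<bar> + 1"
  have "dil 1 {y} (nat (z - y)) = {z}" "dil 2 {y} (nat (z - 2 * y)) = {z}"
    unfolding dil_def z_def by auto
  moreover have "nat (z - y) > 0" "nat (z - 2 * y) > 0"
    unfolding z_def by auto
  moreover have "{y} \<subseteq> H" using assms by simp
  ultimately have "mu {z} = mu {y} / real 1" "mu {z} = mu {y} / real 2"
    using uqd_dil[of "{y}" 1 "nat (z - y)"] uqd_dil[of "{y}" 2 "nat (z - 2 * y)"] by simp_all
  then show ?thesis by simp
qed

lemma uqd_finite_nonpos:
  assumes "finite E" "E \<subseteq> H"
  shows "mu E \<le> 0"
  using assms
proof (induction E rule: finite_induct)
  case empty
  then show ?case by (simp add: uqd_empty)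
next
  case (insert y E)
  then have "mu ({y} \<union> E) \<le> mu {y} + mu E" by (intro uqd_subadditive) auto
  then show ?case using insert uqd_singleton[of y] by simp
qed

lemma uqd_UN_le_sum:
  assumes "finite I" "\<And>i. i \<in> I \<Longrightarrow> A i \<subseteq> H"
  shows "mu (\<Union>i\<in>I. A i) \<le> (\<Sum>i\<in>I. mu (A i))"
  using assms
proof (induction I rule: finite_induct)
  case empty
  then show ?case by (simp add: uqd_empty)
next
  case (insert i I)
  then have "mu (A i \<union> (\<Union>i\<in>I. A i)) \<le> mu (A i) + mu (\<Union>i\<in>I. A i)"
    by (intro uqd_subadditive) auto
  then show ?case using insert by simp
qed

lemma uqd_subset_dil_le:
  assumes "Z \<subseteq> dil k H h" "k > 0" "h > 0"
  shows "mu Z \<le> 1 / real k"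
proof -
  define Z' where "Z' = {x \<in> H. int k * x + int h \<in> Z}"
  have "Z' \<subseteq> H" unfolding Z'_def by blast
  have "Z = dil k Z' h" using assms(1) unfolding Z'_def dil_def by auto
  then have "mu Z = mu Z' / real k" using uqd_dil[OF \<open>Z' \<subseteq> H\<close> assms(2,3)] by simp
  moreover have "mu Z' \<le> 1" using uqd_le_1[OF \<open>Z' \<subseteq> H\<close>] .
  ultimately show ?thesis by (simp add: divide_right_mono)
qed

lemma uqd_le_card_div:
  assumes "Z \<subseteq> H" "T \<subseteq> {1..k}" "k > 0" "finite (Z - (\<Union>h\<in>T. dil k H h))"
  shows "mu Z \<le> real (card T) / real k"
proof -
  define E where "E = Z - (\<Union>h\<in>T. dil k H h)"
  have "finite T" using assms(2) finite_subset by blast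
  have "Z = (\<Union>h\<in>T. Z \<inter> dil k H h) \<union> E" unfolding E_def by blast
  then have "mu Z \<le> mu (\<Union>h\<in>T. Z \<inter> dil k H h) + mu E"
    using assms(1) uqd_subadditive[of "\<Union>h\<in>T. Z \<inter> dil k H h" E] unfolding E_def by auto
  moreover have "mu E \<le> 0"
    using uqd_finite_nonpos assms(1,4) unfolding E_def by blast
  moreover have "mu (\<Union>h\<in>T. Z \<inter> dil k H h) \<le> (\<Sum>h\<in>T. mu (Z \<inter> dil k H h))"
    by (rule uqd_UN_le_sum[OF \<open>finite T\<close>]) (use assms(1) in blast)
  moreover have "(\<Sum>h\<in>T. mu (Z \<inter> dil k H h)) \<le> (\<Sum>h\<in>T. 1 / real k)"
  proof (rule sum_mono)
    fix h assume "h \<in> T"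
    then show "mu (Z \<inter> dil k H h) \<le> 1 / real k"
      using assms(2,3) by (intro uqd_subset_dil_le[where h = h]) auto
  qed
  ultimately show ?thesis by simp
qed

end

lemma mem_dil: "z \<in> dil k A h \<longleftrightarrow> (\<exists>x\<in>A. z = int k * x + int h)"
  by (auto simp: dil_def)

lemma admissible_H_cofactor_mem:
  assumes "admissible_H H" "z \<in> H" "z = int q * y + c" "q > 0"
  shows "y \<in> H \<or> z \<in> {0..<c + int q}"
proof (cases "H = UNIV")
  case False
  then have H: "H = {0..} \<or> H = {1..}" using assms(1) unfolding admissible_H_def by blast
  show ?thesis
  proof (cases "z < c + int q")
    case False
    then have "int q * 1 \<le> int q * y" using assms(3) by simp
    then have "y \<ge> 1" using assms(4) by (simp add: mult_le_cancel_left)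
    then show ?thesis using H by auto
  qed (use H assms(2) in auto)
qed simp

lemma admissible_H_dil_subset:
  assumes "admissible_H H" "k > 0"
  shows "dil k H h \<subseteq> H"
proof -
  have "int k * x + int h \<ge> 1" if "x \<ge> 1" for x
  proof -
    have "int k * 1 \<le> int k * x" using that by (intro mult_left_mono) auto
    then show ?thesis using assms(2) by linarith
  qed
  moreover have "int k * x + int h \<ge> 0" if "x \<ge> 0" for x
    using that by simp
  ultimately show ?thesis
    using assms(1) unfolding admissible_H_def dil_def by (elim disjE) auto
qed

text \<open>Offsets run over \<open>1..k\<close> rather than \<open>0..<k\<close> because the dilation axiom only covers
  positive shifts.\<close>
lemma finite_H_Diff_residue_classes:
  assumes "admissible_H H" "k > 0"
  shows "finite (H - (\<Union>h\<in>{1..k}. dil k H h))"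
proof -
  have "H - (\<Union>h\<in>{1..k}. dil k H h) \<subseteq> {0..<2 * int k}"
  proof
    fix z assume z: "z \<in> H - (\<Union>h\<in>{1..k}. dil k H h)"
    define x where "x = (z - 1) div int k"
    define h where "h = nat ((z - 1) mod int k + 1)"
    have "0 \<le> (z - 1) mod int k" "(z - 1) mod int k < int k"
      using assms(2) by simp_all
    then have h: "h \<in> {1..k}" unfolding h_def by auto
    have zx: "z = int k * x + int h"
      unfolding x_def h_def using assms(2) by (simp add: algebra_simps)
    have "x \<notin> H"
    proof
      assume "x \<in> H"
      then have "z \<in> dil k H h" using zx unfolding mem_dil by blast
      then show False using z h by blast
    qed
    then have "z \<in> {0..<int h + int k}"
      using admissible_H_cofactor_mem[OF assms(1) _ zx assms(2)] z by blast
    then show "z \<in> {0..<2 * int k}" using h by auto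
  qed
  then show ?thesis using finite_subset by blast
qed

lemma dil_dvd_dichotomy:
  assumes "admissible_H H" "k > 0" "q > 0" "q dvd k"
  shows "finite (dil k H h \<inter> dil q H r) \<or> finite (dil k H h - dil q H r)"
proof -
  obtain c where c: "int k = int q * c" using assms(4) by (metis dvd_def of_nat_mult)
  show ?thesis
  proof (cases "int q dvd int h - int r")
    case True
    obtain d where d: "int h - int r = int q * d" using True by blast
    have "dil k H h - dil q H r \<subseteq> {0..<int r + int q}"
    proof
      fix z assume z: "z \<in> dil k H h - dil q H r"
      then obtain x where "x \<in> H" "z = int k * x + int h" by (auto simp: mem_dil)
      then have "z = int q * (c * x + d) + int r" using c d by (simp add: algebra_simps)
      moreover have "z \<in> H" using z admissible_H_dil_subset[OF assms(1,2)] by blast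
      moreover have "c * x + d \<notin> H" using z calculation(1) by (auto simp: mem_dil)
      ultimately show "z \<in> {0..<int r + int q}"
        using admissible_H_cofactor_mem[OF assms(1) _ _ assms(3)] by blast
    qed
    then show ?thesis using finite_subset by blast
  next
    case False
    have "dil k H h \<inter> dil q H r = {}"
    proof (rule ccontr)
      assume "dil k H h \<inter> dil q H r \<noteq> {}"
      then obtain x y where "int k * x + int h = int q * y + int r" by (auto simp: mem_dil)
      then have "int h - int r = int q * (y - c * x)" using c by (simp add: algebra_simps)
      then show False using False by simp
    qed
    then show ?thesis by simp
  qed
qed

lemma residue_class_dichotomy:
  assumes "admissible_H H" "finite F" "\<forall>(q, r) \<in> F. q > 0"
    and "finite (sym_diff Y (\<Union>(q, r) \<in> F. dil q H r))"
  obtains k where "k > 0" "\<And>h. finite (dil k H h \<inter> Y) \<or> finite (dil k H h - Y)"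
proof -
  define k where "k = (\<Prod>(q, r) \<in> F. q)"
  have "k > 0" unfolding k_def using assms(3) by (auto intro: prod_pos)
  moreover have "finite (dil k H h \<inter> Y) \<or> finite (dil k H h - Y)" for h
  proof -
    have "finite (dil k H h \<inter> (case p of (q, r) \<Rightarrow> dil q H r)) \<or>
        finite (dil k H h - (case p of (q, r) \<Rightarrow> dil q H r))" if "p \<in> F" for p
    proof (cases p)
      case (Pair q r)
      then have "q dvd k"
        unfolding k_def using assms(2) that by (metis (mono_tags) case_prod_conv dvd_prod_eqI)
      moreover have "q > 0" using assms(3) that Pair by auto
      ultimately show ?thesis
        using dil_dvd_dichotomy[OF assms(1) \<open>k > 0\<close>] Pair by simp
    qed
    then have "finite (dil k H h \<inter> (\<Union>(q, r) \<in> F. dil q H r)) \<or>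
        finite (dil k H h - (\<Union>(q, r) \<in> F. dil q H r))"
      by (intro finite_Int_or_Diff_UN[OF assms(2)]) blast
    then show ?thesis
      using finite_Int_or_Diff_sym_diff assms(4) by (metis sup_commute)
  qed
  ultimately show thesis using that by blast
qed

lemma almost_union_of_residue_classes:
  assumes "admissible_H H" "Y \<subseteq> H" "k > 0"
    and "\<And>h. finite (dil k H h \<inter> Y) \<or> finite (dil k H h - Y)"
  obtains T where "T \<subseteq> {1..k}"
    "finite (Y - (\<Union>h\<in>T. dil k H h))"
    "finite ((H - Y) - (\<Union>h\<in>{1..k} - T. dil k H h))"
proof -
  define T where "T = {h \<in> {1..k}. finite (dil k H h - Y)}"
  define E where "E = H - (\<Union>h\<in>{1..k}. dil k H h)"
  have "finite E" unfolding E_def using finite_H_Diff_residue_classes[OF assms(1,3)] .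
  have "T \<subseteq> {1..k}" unfolding T_def by blast
  have "Y - (\<Union>h\<in>T. dil k H h) \<subseteq> E \<union> (\<Union>h\<in>{1..k} - T. dil k H h \<inter> Y)"
    unfolding E_def using assms(2) by blast
  moreover have "finite (\<Union>h\<in>{1..k} - T. dil k H h \<inter> Y)"
    using assms(4) unfolding T_def by (intro finite_UN_I) auto
  ultimately have "finite (Y - (\<Union>h\<in>T. dil k H h))"
    using \<open>finite E\<close> finite_subset by blast
  have "(H - Y) - (\<Union>h\<in>{1..k} - T. dil k H h) \<subseteq> E \<union> (\<Union>h\<in>T. dil k H h - Y)"
    unfolding E_def T_def by blast
  moreover have "finite (\<Union>h\<in>T. dil k H h - Y)"
    unfolding T_def by (intro finite_UN_I) auto
  ultimately have "finite ((H - Y) - (\<Union>h\<in>{1..k} - T. dil k H h))"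
    using \<open>finite E\<close> finite_subset by blast
  with \<open>T \<subseteq> {1..k}\<close> \<open>finite (Y - (\<Union>h\<in>T. dil k H h))\<close> show thesis using that by blast
qed

theorem mainTheorem7:
  fixes H X Y :: "int set" and mu :: "int set \<Rightarrow> real"
  assumes "admissible_H H"
    and "upper_quasi_density H mu"
    and "X \<subseteq> Y" and "Y \<subseteq> H"
    and "\<exists>F :: (nat \<times> nat) set. finite F \<and> (\<forall>(q, r) \<in> F. q > 0) \<and>
           finite ((Y - (\<Union>(q, r) \<in> F. dil q H r)) \<union> ((\<Union>(q, r) \<in> F. dil q H r) - Y))"
  shows "mu X \<le> mu Y"
proof -
  obtain k where k: "k > 0" "\<And>h. finite (dil k H h \<inter> Y) \<or> finite (dil k H h - Y)"
    using assms(5) residue_class_dichotomy[OF assms(1)] by blast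
  obtain T where T: "T \<subseteq> {1..k}" "finite (Y - (\<Union>h\<in>T. dil k H h))"
    "finite ((H - Y) - (\<Union>h\<in>{1..k} - T. dil k H h))"
    using almost_union_of_residue_classes[OF assms(1,4) k] by blast
  have "finite (X - (\<Union>h\<in>T. dil k H h))"
    using T(2) assms(3) by (meson Diff_mono finite_subset order_refl)
  then have "mu X \<le> card T / k"
    using uqd_le_card_div[OF assms(2) _ T(1) k(1)] assms(3,4) by blast
  moreover have "mu (H - Y) \<le> card ({1..k} - T) / k"
    using uqd_le_card_div[OF assms(2) _ _ k(1) T(3)] by blast
  moreover have "card T \<le> k" "card ({1..k} - T) = k - card T"
    using card_mono[of "{1..k}" T] T(1) by (simp_all add: card_Diff_subset finite_subset)
  moreover have "1 \<le> mu Y + mu (H - Y)"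
    using uqd_le_add_complement[OF assms(2,4)] .
  ultimately show ?thesis
    using k(1) by (simp add: of_nat_diff diff_divide_distrib)
qed

end
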